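(* Let $M$ be a matroid of rank at least $1$ having two disjoint bases. Then $\chi(\operatorname{KG}(M))=f(M)$.
   Context: The matroid Kneser graph $\operatorname{KG}(M)$ has the bases of $M$ as vertices, two bases being adjacent when they are disjoint; $\chi$ denotes chromatic number. For a matroid $M$, $\mathcal{B}(M)$ denotes its set of bases, and the distance between two bases $B,B'$ is $|B\triangle B'|$; $\operatorname{diam}$ denotes diameter. The Borsuk number $f(M)$ is the minimum number of parts in a partition of $\mathcal{B}(M)$ in which every part has diameter strictly smaller than $\operatorname{diam}(\mathcal{B}(M))$; if $M$ has exactly one basis, $f(M):=+\infty$. *)

theory Defs
  imports Main "HOL-Library.Extended_Nat"
begin

definition matroid_bases :: "'a set \<Rightarrow> 'a set set \<Rightarrow> bool" where
  "matroid_bases E \<B> \<longleftrightarrow> finite E \<and> \<B> \<noteq> {} \<and> (\<forall>B\<in>\<B>. B \<subseteq> E) \<and>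
     (\<forall>B1\<in>\<B>. \<forall>B2\<in>\<B>. \<forall>x\<in>B1 - B2. \<exists>y\<in>B2 - B1. insert y (B1 - {x}) \<in> \<B>)"

text \<open>Rank of the matroid: the common cardinality of its bases.\<close>
definition matroid_rank :: "'a set set \<Rightarrow> nat" where
  "matroid_rank \<B> = card (SOME B. B \<in> \<B>)"

definition chromatic_number :: "'v set \<Rightarrow> ('v \<Rightarrow> 'v \<Rightarrow> bool) \<Rightarrow> nat" where
  "chromatic_number V adj = (LEAST k. \<exists>c :: 'v \<Rightarrow> nat.
      (\<forall>v\<in>V. c v < k) \<and> (\<forall>u\<in>V. \<forall>v\<in>V. adj u v \<longrightarrow> c u \<noteq> c v))"

definition kneser_adj :: "'a set \<Rightarrow> 'a set \<Rightarrow> bool" where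
  "kneser_adj B B' \<longleftrightarrow> B \<inter> B' = {}"

definition chi_KG :: "'a set set \<Rightarrow> nat" where
  "chi_KG \<B> = chromatic_number \<B> kneser_adj"

definition set_diam :: "'a set set \<Rightarrow> nat" where
  "set_diam S = Max {card ((B - B') \<union> (B' - B)) | B B'. B \<in> S \<and> B' \<in> S}"

definition is_partition :: "'b set \<Rightarrow> 'b set set \<Rightarrow> bool" where
  "is_partition X P \<longleftrightarrow> \<Union>P = X \<and> {} \<notin> P \<and>
     (\<forall>p\<in>P. \<forall>q\<in>P. p \<noteq> q \<longrightarrow> p \<inter> q = {})"

definition borsuk_number :: "'a set set \<Rightarrow> enat" where
  "borsuk_number \<B> = (if card \<B> = 1 then \<infinity> else
     enat (LEAST k. \<exists>P. is_partition \<B> P \<and> finite P \<and> card P = k \<and>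
        (\<forall>p\<in>P. set_diam p < set_diam \<B>)))"

end

theory Submission imports Defs begin

text \<open>All bases have the same size r, so |B \<triangle> B'| = 2(r - |B \<inter> B'|). Two disjoint bases make
  the diameter of the basis family equal to 2r, hence a subfamily has smaller diameter exactly
  when its members pairwise intersect, i.e. when it is independent in the Kneser graph. Borsuk
  partitions are therefore the partitions into colour classes of the Kneser graph, and both
  numbers count the least number of classes.\<close>

definition independent_set :: "('v \<Rightarrow> 'v \<Rightarrow> bool) \<Rightarrow> 'v set \<Rightarrow> bool" where
  "independent_set adj p \<longleftrightarrow> (\<forall>u\<in>p. \<forall>v\<in>p. \<not> adj u v)"

definition colorable :: "'v set \<Rightarrow> ('v \<Rightarrow> 'v \<Rightarrow> bool) \<Rightarrow> nat \<Rightarrow> bool" where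
  "colorable V adj k \<longleftrightarrow> (\<exists>c :: 'v \<Rightarrow> nat.
      (\<forall>v\<in>V. c v < k) \<and> (\<forall>u\<in>V. \<forall>v\<in>V. adj u v \<longrightarrow> c u \<noteq> c v))"

definition independent_partition :: "'v set \<Rightarrow> ('v \<Rightarrow> 'v \<Rightarrow> bool) \<Rightarrow> nat \<Rightarrow> bool" where
  "independent_partition V adj k \<longleftrightarrow> (\<exists>P. is_partition V P \<and> finite P \<and> card P = k \<and>
      (\<forall>p\<in>P. independent_set adj p))"

lemma colorable_imp_independent_partition:
  fixes V :: "'v set"
  assumes "colorable V adj k"
  shows "\<exists>m\<le>k. independent_partition V adj m"
proof -
  obtain c :: "'v \<Rightarrow> nat" where c_less: "\<forall>v\<in>V. c v < k"
    and c_proper: "\<forall>u\<in>V. \<forall>v\<in>V. adj u v \<longrightarrow> c u \<noteq> c v"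
    using assms unfolding colorable_def by blast
  define P where "P = (\<lambda>i. {v\<in>V. c v = i}) ` {..<k} - {{}}"
  have "card P \<le> k"
    unfolding P_def
    by (rule le_trans[OF card_Diff1_le]) (metis card_image_le card_lessThan finite_lessThan)
  moreover have "is_partition V P"
    unfolding is_partition_def
  proof (intro conjI)
    show "\<Union> P = V"
    proof
      show "\<Union> P \<subseteq> V"
        unfolding P_def by auto
      show "V \<subseteq> \<Union> P"
      proof
        fix v assume "v \<in> V"
        then have "v \<in> {u\<in>V. c u = c v}" "c v < k"
          using c_less by auto
        then show "v \<in> \<Union> P"
          unfolding P_def by blast
      qed
    qed
    show "{} \<notin> P"
      unfolding P_def by simp
    show "\<forall>p\<in>P. \<forall>q\<in>P. p \<noteq> q \<longrightarrow> p \<inter> q = {}"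
      unfolding P_def by auto
  qed
  moreover have "\<forall>p\<in>P. independent_set adj p"
    unfolding P_def independent_set_def using c_proper by fastforce
  ultimately show ?thesis
    unfolding independent_partition_def P_def by blast
qed

lemma independent_partition_imp_colorable:
  fixes V :: "'v set"
  assumes "independent_partition V adj k"
  shows "colorable V adj k"
proof -
  obtain P where part: "is_partition V P" and "finite P" and "card P = k"
    and indep: "\<forall>p\<in>P. independent_set adj p"
    using assms unfolding independent_partition_def by blast
  obtain h where h: "bij_betw h P {0..<k}"
    using ex_bij_betw_finite_nat[OF \<open>finite P\<close>] \<open>card P = k\<close> by blast
  define part_of where "part_of v = (SOME p. p \<in> P \<and> v \<in> p)" for v
  have part_of: "part_of v \<in> P" "v \<in> part_of v" if "v \<in> V" for v
  proof -
    have "\<exists>p. p \<in> P \<and> v \<in> p" using part that unfolding is_partition_def by auto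
    then show "part_of v \<in> P" "v \<in> part_of v"
      unfolding part_of_def by (metis (mono_tags, lifting) someI_ex)+
  qed
  have "\<forall>v\<in>V. h (part_of v) < k"
    using part_of bij_betw_apply[OF h] by fastforce
  moreover have "\<not> adj u v" if "u \<in> V" "v \<in> V" "h (part_of u) = h (part_of v)" for u v
  proof -
    have "part_of u = part_of v"
      using bij_betw_imp_inj_on[OF h] part_of that by (meson inj_onD)
    then show ?thesis
      using indep part_of that unfolding independent_set_def by metis
  qed
  ultimately show ?thesis
    unfolding colorable_def by (intro exI[of _ "h \<circ> part_of"]) auto
qed

lemma chromatic_number_eq_Least_independent_partition:
  "chromatic_number V adj = (LEAST k. independent_partition V adj k)"
proof (cases "\<exists>k. colorable V adj k")
  case True
  then have "colorable V adj (LEAST k. colorable V adj k)"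
    by (rule LeastI_ex)
  then obtain m where "m \<le> (LEAST k. colorable V adj k)" "independent_partition V adj m"
    using colorable_imp_independent_partition by blast
  then have "(LEAST k. independent_partition V adj k) \<le> (LEAST k. colorable V adj k)"
    using Least_le[of "independent_partition V adj" m] by linarith
  moreover have "independent_partition V adj (LEAST k. independent_partition V adj k)"
    using \<open>independent_partition V adj m\<close> by (rule LeastI)
  then have "(LEAST k. colorable V adj k) \<le> (LEAST k. independent_partition V adj k)"
    by (intro Least_le independent_partition_imp_colorable)
  ultimately show ?thesis
    unfolding chromatic_number_def colorable_def by simp
next
  case False
  then have "independent_partition V adj = colorable V adj"
    using independent_partition_imp_colorable by blast
  then show ?thesis
    unfolding chromatic_number_def colorable_def by simp
qed

lemma card_sym_diff_eq:
  assumes "finite A" "finite B" "card A = card B"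
  shows "card ((A - B) \<union> (B - A)) = 2 * (card A - card (A \<inter> B))"
proof -
  have "card ((A - B) \<union> (B - A)) = card (A - B) + card (B - A)"
    by (rule card_Un_disjoint) (use assms in auto)
  also have "\<dots> = (card A - card (A \<inter> B)) + (card B - card (B \<inter> A))"
    using assms by (simp add: card_Diff_subset_Int)
  finally show ?thesis
    using assms(3) by (simp add: Int_commute)
qed

lemma card_sym_diff_le:
  assumes "finite A" "finite B" "card A = r" "card B = r"
  shows "card ((A - B) \<union> (B - A)) \<le> 2 * r"
  using card_sym_diff_eq[of A B] assms by simp

lemma card_sym_diff_less_iff:
  assumes "finite A" "finite B" "card A = r" "card B = r"
  shows "card ((A - B) \<union> (B - A)) < 2 * r \<longleftrightarrow> A \<inter> B \<noteq> {}"
proof -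
  have "card (A \<inter> B) \<le> r"
    using assms card_mono[of A "A \<inter> B"] by auto
  moreover have "A \<inter> B \<noteq> {} \<longleftrightarrow> 0 < card (A \<inter> B)"
    using assms by (simp add: card_gt_0_iff)
  ultimately show ?thesis
    using card_sym_diff_eq[of A B] assms by presburger
qed

lemma finite_sym_diff_cards:
  assumes "finite S"
  shows "finite {card ((B - B') \<union> (B' - B)) | B B'. B \<in> S \<and> B' \<in> S}"
proof -
  have "{card ((B - B') \<union> (B' - B)) | B B'. B \<in> S \<and> B' \<in> S}
      = (\<lambda>(B, B'). card ((B - B') \<union> (B' - B))) ` (S \<times> S)"
    by auto
  then show ?thesis
    using assms by simp
qed

lemma set_diam_less_iff_pairwise_intersecting:
  assumes "finite S" "S \<noteq> {}" "\<And>B. B \<in> S \<Longrightarrow> finite B \<and> card B = r"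
  shows "set_diam S < 2 * r \<longleftrightarrow> (\<forall>B\<in>S. \<forall>B'\<in>S. B \<inter> B' \<noteq> {})"
proof -
  have "set_diam S < 2 * r \<longleftrightarrow> (\<forall>B\<in>S. \<forall>B'\<in>S. card ((B - B') \<union> (B' - B)) < 2 * r)"
    unfolding set_diam_def using finite_sym_diff_cards[OF assms(1)] assms(2)
    by (subst Max_less_iff) auto
  also have "\<dots> \<longleftrightarrow> (\<forall>B\<in>S. \<forall>B'\<in>S. B \<inter> B' \<noteq> {})"
  proof -
    have "card ((B - B') \<union> (B' - B)) < 2 * r \<longleftrightarrow> B \<inter> B' \<noteq> {}"
      if "B \<in> S" "B' \<in> S" for B B'
      using assms(3)[OF that(1)] assms(3)[OF that(2)] by (intro card_sym_diff_less_iff) auto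
    then show ?thesis
      by blast
  qed
  finally show ?thesis .
qed

lemma set_diam_eq_twice_card:
  assumes "finite S" "\<And>B. B \<in> S \<Longrightarrow> finite B \<and> card B = r"
    and "B1 \<in> S" "B2 \<in> S" "B1 \<inter> B2 = {}"
  shows "set_diam S = 2 * r"
  unfolding set_diam_def
proof (rule Max_eqI)
  show "finite {card ((B - B') \<union> (B' - B)) | B B'. B \<in> S \<and> B' \<in> S}"
    using finite_sym_diff_cards[OF assms(1)] .
  show "d \<le> 2 * r" if "d \<in> {card ((B - B') \<union> (B' - B)) | B B'. B \<in> S \<and> B' \<in> S}" for d
    using that assms(2) card_sym_diff_le by blast
  have "card ((B1 - B2) \<union> (B2 - B1)) = 2 * r"
    using card_sym_diff_eq[of B1 B2] assms(2-5) by simp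
  then show "2 * r \<in> {card ((B - B') \<union> (B' - B)) | B B'. B \<in> S \<and> B' \<in> S}"
    by (intro CollectI exI[of _ B1] exI[of _ B2]) (use assms(3,4) in simp)
qed

lemma matroid_bases_finite:
  assumes "matroid_bases E \<B>"
  shows "finite \<B>" and "\<And>B. B \<in> \<B> \<Longrightarrow> finite B"
proof -
  have "finite E" "\<B> \<subseteq> Pow E"
    using assms unfolding matroid_bases_def by auto
  then show "finite \<B>" "\<And>B. B \<in> \<B> \<Longrightarrow> finite B"
    by (auto intro: finite_subset)
qed

lemma matroid_bases_card_eq:
  assumes M: "matroid_bases E \<B>" and "B1 \<in> \<B>" "B2 \<in> \<B>"
  shows "card B1 = card B2"
  using assms(2,3)
proof (induction "card (B1 - B2)" arbitrary: B1)
  case 0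
  have "B1 - B2 = {}"
    using 0 matroid_bases_finite(2)[OF M] by simp
  moreover have "B2 - B1 = {}"
    using M 0 \<open>B1 - B2 = {}\<close> unfolding matroid_bases_def by blast
  ultimately show ?case
    by (metis Diff_eq_empty_iff subset_antisym)
next
  case (Suc n)
  have fin: "finite B1"
    using matroid_bases_finite(2)[OF M Suc.prems(1)] .
  obtain x where x: "x \<in> B1 - B2"
    using Suc.hyps(2) by (metis card.empty equals0I nat.distinct(1))
  then obtain y where y: "y \<in> B2 - B1" and exch: "insert y (B1 - {x}) \<in> \<B>"
    using M Suc.prems unfolding matroid_bases_def by blast
  have "insert y (B1 - {x}) - B2 = (B1 - B2) - {x}"
    using x y by auto
  then have "n = card (insert y (B1 - {x}) - B2)"
    using Suc.hyps(2) x fin by simp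
  then have "card (insert y (B1 - {x})) = card B2"
    using Suc.hyps(1) exch Suc.prems(2) by blast
  moreover have "card (insert y (B1 - {x})) = card B1"
    using x y fin card.remove[of B1 x] by simp
  ultimately show ?case
    by simp
qed

lemma matroid_bases_card_rank:
  assumes "matroid_bases E \<B>" "B \<in> \<B>"
  shows "card B = matroid_rank \<B>"
proof -
  have "(SOME B. B \<in> \<B>) \<in> \<B>"
    using assms(2) by (rule someI)
  then show ?thesis
    unfolding matroid_rank_def by (rule matroid_bases_card_eq[OF assms(1,2)])
qed

theorem lemma4p5:
  fixes E :: "'a set" and \<B> :: "'a set set"
  assumes "matroid_bases E \<B>"
    and "matroid_rank \<B> \<ge> 1"
    and "\<exists>B1\<in>\<B>. \<exists>B2\<in>\<B>. B1 \<inter> B2 = {}"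
  shows "enat (chi_KG \<B>) = borsuk_number \<B>"
proof -
  define r where "r = matroid_rank \<B>"
  have bases: "\<And>B. B \<in> \<B> \<Longrightarrow> finite B \<and> card B = r"
    using matroid_bases_finite(2) matroid_bases_card_rank assms(1) unfolding r_def by blast
  obtain B1 B2 where B12: "B1 \<in> \<B>" "B2 \<in> \<B>" "B1 \<inter> B2 = {}"
    using assms(3) by blast
  have diam: "set_diam \<B> = 2 * r"
    using set_diam_eq_twice_card[OF matroid_bases_finite(1)[OF assms(1)] bases B12] .
  have "B1 \<noteq> {}"
    using bases[OF B12(1)] assms(2) unfolding r_def by auto
  then have "card \<B> \<noteq> 1"
    using B12 by (auto simp: card_1_singleton_iff)
  have indep_iff: "set_diam p < set_diam \<B> \<longleftrightarrow> independent_set kneser_adj p"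
    if "p \<subseteq> \<B>" "p \<noteq> {}" for p
  proof -
    have "finite p"
      using finite_subset[OF that(1) matroid_bases_finite(1)[OF assms(1)]] .
    then have "set_diam p < 2 * r \<longleftrightarrow> (\<forall>B\<in>p. \<forall>B'\<in>p. B \<inter> B' \<noteq> {})"
      by (rule set_diam_less_iff_pairwise_intersecting) (use that bases in auto)
    then show ?thesis
      unfolding diam independent_set_def kneser_adj_def by simp
  qed
  have "(\<forall>p\<in>P. set_diam p < set_diam \<B>) \<longleftrightarrow> (\<forall>p\<in>P. independent_set kneser_adj p)"
    if "is_partition \<B> P" for P
  proof -
    have "p \<subseteq> \<B> \<and> p \<noteq> {}" if "p \<in> P" for p
      using \<open>is_partition \<B> P\<close> that unfolding is_partition_def by auto
    then show ?thesis
      using indep_iff by blast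
  qed
  then have "(\<lambda>k. \<exists>P. is_partition \<B> P \<and> finite P \<and> card P = k \<and>
      (\<forall>p\<in>P. set_diam p < set_diam \<B>)) = independent_partition \<B> kneser_adj"
    unfolding independent_partition_def by blast
  then have "borsuk_number \<B> = enat (LEAST k. independent_partition \<B> kneser_adj k)"
    unfolding borsuk_number_def using \<open>card \<B> \<noteq> 1\<close> by simp
  then show ?thesis
    unfolding chi_KG_def chromatic_number_eq_Least_independent_partition by simp
qed

end
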